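(* Let $(w^*,\lambda^* )$ with $w^*\in[0,1]^n$, $\lambda^*\in\mathbb{R}^{d-1}$ be an optimal solution of the program defining $V$ (so $X^T(w^*\star(\tilde X\lambda^*-y))=0$ and $\|w^*\|_1=V$). Let $R^*$ be the region containing $\lambda^*$, and suppose that for every $\lambda\in R^*$ the number of $i\in[n]\setminus(B^*_M\cup B^*_{\delta M})$ with $\left|\frac{|r_i(\lambda)|}{|r_i(\lambda^* )|}-1\right|>\epsilon$ is at most $\epsilon n$, where $B^*_M=\{i:|r_i(\lambda^* )|>M\}$ and $B^*_{\delta M}=\{i:|r_i(\lambda^* )|\le\delta M/\sqrt n\}$. Then either $\max_R|B_{\delta M}(R)|>\epsilon n$, or $$V-12\epsilon n-1\le\max_R\hat V(R)\le V,$$ where the maxima are over all regions $R$.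
   Context: Samples $(X_i,y_i)_{i=1}^n$, $X_i\in\mathbb{R}^d$, $y_i\in\mathbb{R}$; $X$ is the $n\times d$ matrix with rows $X_i$; $\tilde X$ is the $n\times(d-1)$ matrix of columns $2,\dots,d$ of $X$ with rows $\tilde X_i$; $r_i(\lambda)=\langle\tilde X_i,\lambda\rangle-y_i$; $\star$ is the entrywise product. $V:=\sup\{\|w\|_1: w\in[0,1]^n,\lambda\in\mathbb{R}^{d-1}, X^T(w\star(\tilde X\lambda-y))=0\}$ (so $V=n$ minus the finite-sample stability). $M=\|X\beta^{(0)}-y\|_2$ with $\beta^{(0)}$ any minimizer of $\|X\beta-y\|_2^2$. Fix $\epsilon,\delta>0$ and $S\subseteq[n]$. Let $\mathcal E$ be the equations: $r_i(\lambda)=0$ ($i\in[n]$); $r_i(\lambda)=\pm M$ ($i\in[n]$); $r_i(\lambda)=\pm\delta M/\sqrt n$ ($i\in[n]$); $r_i(\lambda)=\pm(1+\epsilon)^k\delta M/\sqrt n$ ($i\in S$, $0\le k\le\lceil\log_{1+\epsilon}(\sqrt n/\delta)\rceil$). Regions: for each satisfiable assignment of the equations of $\mathcal E$ to $\{=,<,>\}$, the set of $\lambda$ satisfying them with strict inequalities made non-strict. For each region $R$ fix a representative $\lambda_0(R)\in R$ and a sign vector $\sigma\in\{-1,1\}^n$ such that $\sigma_i=1$ implies $r_i(\lambda)\ge0$ for all $\lambda\in R$ and $\sigma_i=-1$ implies $r_i(\lambda)\le 0$ for all $\lambda\in R$. Let $B_M(R)=\{i:|r_i(\lambda_0(R))|>M\}$,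 $B_{\delta M}(R)=\{i:|r_i(\lambda_0(R))|<\delta M/\sqrt n\}$. Let $(\hat g(R),\hat\lambda(R))$ be any maximizer over $g\in\mathbb{R}^n$, $\lambda\in R$ of $\sum_{i\in[n]\setminus(B_M(R)\cup B_{\delta M}(R))}\min\!\left(\frac{g_i}{r_i(\lambda_0(R))},1\right)$ subject to $X^Tg=0$, $0\le g_i\le r_i(\lambda)$ for $\sigma_i=1$, and $r_i(\lambda)\le g_i\le0$ for $\sigma_i=-1$. Define $\hat V(R)=\sum_{i\in[n]}\frac{\hat g(R)_i}{r_i(\hat\lambda(R))}$ with the convention $0/0=1$. If several regions contain $\lambda^*$, $R^*$ is any one of them. *)

theory Defs
  imports Complex_Main
begin

text \<open>Conventions: samples are indexed by i < n (0-based), columns of X by j < d.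
  The reduced matrix (columns 2..d of X) has entries X i (Suc j), j < d - 1.
  Vectors lambda in R^(d-1) are functions nat => real vanishing from index d - 1 on.\<close>

definition vecs :: "nat \<Rightarrow> (nat \<Rightarrow> real) set" where
  "vecs k = {v. \<forall>j\<ge>k. v j = 0}"

definition resid :: "(nat \<Rightarrow> nat \<Rightarrow> real) \<Rightarrow> (nat \<Rightarrow> real) \<Rightarrow> nat \<Rightarrow> (nat \<Rightarrow> real) \<Rightarrow> nat \<Rightarrow> real" where
  "resid X y d lam i = (\<Sum>j<d - 1. X i (Suc j) * lam j) - y i"

definition feasV :: "(nat \<Rightarrow> nat \<Rightarrow> real) \<Rightarrow> (nat \<Rightarrow> real) \<Rightarrow> nat \<Rightarrow> nat \<Rightarrow> (nat \<Rightarrow> real) \<Rightarrow> (nat \<Rightarrow> real) \<Rightarrow> bool" where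
  "feasV X y n d w lam \<longleftrightarrow> (\<forall>i<n. 0 \<le> w i \<and> w i \<le> 1) \<and> lam \<in> vecs (d - 1) \<and>
     (\<forall>j<d. (\<Sum>i<n. X i j * (w i * resid X y d lam i)) = 0)"

definition Vval :: "(nat \<Rightarrow> nat \<Rightarrow> real) \<Rightarrow> (nat \<Rightarrow> real) \<Rightarrow> nat \<Rightarrow> nat \<Rightarrow> real" where
  "Vval X y n d = Sup {(\<Sum>i<n. \<bar>w i\<bar>) | w lam. feasV X y n d w lam}"

text \<open>The equations of E, each "r_i(lambda) = c" encoded as the pair (i, c).\<close>
definition eqns :: "nat \<Rightarrow> real \<Rightarrow> real \<Rightarrow> real \<Rightarrow> nat set \<Rightarrow> (nat \<times> real) set" where
  "eqns n M eps delta S =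
     {(i, c). i < n \<and> (c = 0 \<or> c = M \<or> c = - M \<or> c = delta * M / sqrt n \<or> c = - (delta * M / sqrt n))}
   \<union> {(i, c). i \<in> S \<and> (\<exists>k::nat. int k \<le> \<lceil>log (1 + eps) (sqrt n / delta)\<rceil> \<and>
        (c = (1 + eps) ^ k * delta * M / sqrt n \<or> c = - ((1 + eps) ^ k * delta * M / sqrt n)))}"

definition satisfiable :: "(nat \<Rightarrow> nat \<Rightarrow> real) \<Rightarrow> (nat \<Rightarrow> real) \<Rightarrow> nat \<Rightarrow> (nat \<times> real) set \<Rightarrow> (nat \<times> real \<Rightarrow> int) \<Rightarrow> bool" where
  "satisfiable X y d E s \<longleftrightarrow> (\<forall>e\<in>E. s e \<in> {-1, 0, 1}) \<and>
     (\<exists>lam\<in>vecs (d - 1). \<forall>(i, c)\<in>E.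
        (s (i, c) = 0 \<longrightarrow> resid X y d lam i = c) \<and>
        (s (i, c) = -1 \<longrightarrow> resid X y d lam i < c) \<and>
        (s (i, c) = 1 \<longrightarrow> resid X y d lam i > c))"

definition region :: "(nat \<Rightarrow> nat \<Rightarrow> real) \<Rightarrow> (nat \<Rightarrow> real) \<Rightarrow> nat \<Rightarrow> (nat \<times> real) set \<Rightarrow> (nat \<times> real \<Rightarrow> int) \<Rightarrow> (nat \<Rightarrow> real) set" where
  "region X y d E s = {lam \<in> vecs (d - 1). \<forall>(i, c)\<in>E.
        (s (i, c) = 0 \<longrightarrow> resid X y d lam i = c) \<and>
        (s (i, c) = -1 \<longrightarrow> resid X y d lam i \<le> c) \<and>
        (s (i, c) = 1 \<longrightarrow> resid X y d lam i \<ge> c)}"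

definition regions :: "(nat \<Rightarrow> nat \<Rightarrow> real) \<Rightarrow> (nat \<Rightarrow> real) \<Rightarrow> nat \<Rightarrow> (nat \<times> real) set \<Rightarrow> (nat \<Rightarrow> real) set set" where
  "regions X y d E = {region X y d E s | s. satisfiable X y d E s}"

definition BM :: "(nat \<Rightarrow> nat \<Rightarrow> real) \<Rightarrow> (nat \<Rightarrow> real) \<Rightarrow> nat \<Rightarrow> nat \<Rightarrow> real \<Rightarrow> (nat \<Rightarrow> real) \<Rightarrow> nat set" where
  "BM X y n d M lam = {i. i < n \<and> \<bar>resid X y d lam i\<bar> > M}"

definition BdM :: "(nat \<Rightarrow> nat \<Rightarrow> real) \<Rightarrow> (nat \<Rightarrow> real) \<Rightarrow> nat \<Rightarrow> nat \<Rightarrow> real \<Rightarrow> real \<Rightarrow> (nat \<Rightarrow> real) \<Rightarrow> nat set" where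
  "BdM X y n d M delta lam = {i. i < n \<and> \<bar>resid X y d lam i\<bar> < delta * M / sqrt n}"

definition gfeas :: "(nat \<Rightarrow> nat \<Rightarrow> real) \<Rightarrow> (nat \<Rightarrow> real) \<Rightarrow> nat \<Rightarrow> nat \<Rightarrow> (nat \<Rightarrow> real) set \<Rightarrow> (nat \<Rightarrow> real) \<Rightarrow> (nat \<Rightarrow> real) \<Rightarrow> (nat \<Rightarrow> real) \<Rightarrow> bool" where
  "gfeas X y n d R sigma g lam \<longleftrightarrow> lam \<in> R \<and> (\<forall>j<d. (\<Sum>i<n. X i j * g i) = 0) \<and>
     (\<forall>i<n. (sigma i = 1 \<longrightarrow> 0 \<le> g i \<and> g i \<le> resid X y d lam i) \<and>
            (sigma i = -1 \<longrightarrow> resid X y d lam i \<le> g i \<and> g i \<le> 0))"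

definition gobj :: "(nat \<Rightarrow> nat \<Rightarrow> real) \<Rightarrow> (nat \<Rightarrow> real) \<Rightarrow> nat \<Rightarrow> nat \<Rightarrow> real \<Rightarrow> real \<Rightarrow> (nat \<Rightarrow> real) \<Rightarrow> (nat \<Rightarrow> real) \<Rightarrow> real" where
  "gobj X y n d M delta lam0 g =
     (\<Sum>i\<in>{..<n} - (BM X y n d M lam0 \<union> BdM X y n d M delta lam0).
        min (g i / resid X y d lam0 i) 1)"

definition div01 :: "real \<Rightarrow> real \<Rightarrow> real" where
  "div01 a b = (if a = 0 \<and> b = 0 then 1 else a / b)"

definition Vhat :: "(nat \<Rightarrow> nat \<Rightarrow> real) \<Rightarrow> (nat \<Rightarrow> real) \<Rightarrow> nat \<Rightarrow> nat \<Rightarrow> (nat \<Rightarrow> real) \<Rightarrow> (nat \<Rightarrow> real) \<Rightarrow> real" where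
  "Vhat X y n d g lam = (\<Sum>i<n. div01 (g i) (resid X y d lam i))"

end

(*
  Let (wstar, lamstar) attain V and let R be the cell of lamstar, the smallest region containing it;
  its representative lam0 and the solution lamhat of its program lie in the same cell, so the
  residuals at lamstar, lam0 and lamhat have the same signs and the same position relative to
  the thresholds M and delta M / sqrt n.  The scaled residuals wstar r(lamstar) are feasible for the
  program of R, so its optimum is at least the sum of min (wstar_i r_i(lamstar) / r_i(lam0)) 1,
  which is within eps of wstar_i wherever r_i(lam0) is within a factor 1 + eps of r_i(lamstar);
  symmetrically each objective term is within 2 eps of the weight ghat_i / r_i(lamhat) counted by
  Vhat(R).  The exceptional indices are few: stability bounds those with distorted residuals,
  the weighted least-squares inequality sum_i w_i r_i^2 <= M^2 (for any feasible w) bounds the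
  weight on residuals above M by 1, and the deficit on residuals below delta M / sqrt n is charged
  to |B_deltaM| of the region at a vertex of the arrangement, reached by decreasing sum |r_i|
  inside the cell.  The upper bound holds because ghat / r(lamhat) is itself feasible for V.
*)

theory Submission
  imports Defs "HOL-Library.FuncSet"
begin

section \<open>Line search on the real line\<close>

definition stays_on_side :: "real \<Rightarrow> real \<Rightarrow> real \<Rightarrow> bool" where
  "stays_on_side c a b \<longleftrightarrow> (a = c \<longrightarrow> b = c) \<and> (a < c \<longrightarrow> b \<le> c) \<and> (c < a \<longrightarrow> c \<le> b)"

lemma stays_on_side_shift: "stays_on_side c a b \<longleftrightarrow> stays_on_side 0 (a - c) (b - c)"
  unfolding stays_on_side_def by auto

lemma stays_on_side_trans:
  "stays_on_side c a b \<Longrightarrow> stays_on_side c b e \<Longrightarrow> stays_on_side c a e"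
  unfolding stays_on_side_def by (smt (verit))

lemma stays_on_side_zero_abs: "stays_on_side 0 a b \<Longrightarrow> \<bar>b\<bar> = sgn a * b"
  unfolding stays_on_side_def by (auto simp: sgn_if)

lemma stays_on_side_zero_mult_nonneg: "stays_on_side 0 a b \<Longrightarrow> 0 \<le> a * b"
  unfolding stays_on_side_def by (smt (verit) mult_nonneg_nonneg mult_nonpos_nonpos)

lemma stays_on_side_abs:
  assumes "stays_on_side c a b" "stays_on_side (- c) a b"
  shows "\<bar>a\<bar> \<le> c \<Longrightarrow> \<bar>b\<bar> \<le> c" and "c < \<bar>a\<bar> \<Longrightarrow> c \<le> \<bar>b\<bar>" and "\<bar>a\<bar> = c \<Longrightarrow> b = a"
  using assms unfolding stays_on_side_def by auto

lemma exists_first_crossing: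
  fixes a b :: "'e \<Rightarrow> real"
  assumes "finite E" "e0 \<in> E" "a e0 * b e0 < 0" and fixed: "\<And>e. e \<in> E \<Longrightarrow> a e = 0 \<Longrightarrow> b e = 0"
  shows "\<exists>t>0. (\<forall>e\<in>E. stays_on_side 0 (a e) (a e + t * b e)) \<and> (\<exists>e\<in>E. a e \<noteq> 0 \<and> a e + t * b e = 0)"
proof -
  define H where "H = (\<lambda>e. - a e / b e) ` {e\<in>E. a e * b e < 0}"
  define t where "t = Min H"
  have "finite H" "H \<noteq> {}" using assms(1-3) unfolding H_def by auto
  then obtain e1 where e1: "e1 \<in> E" "a e1 * b e1 < 0" "t = - a e1 / b e1"
    unfolding t_def H_def using Min_in by blast
  have t_le: "t \<le> - a e / b e" if "e \<in> E" "a e * b e < 0" for e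
    unfolding t_def using \<open>finite H\<close> that H_def by auto
  have "0 < t" using e1 by (auto simp: mult_less_0_iff divide_less_0_iff)
  moreover have "stays_on_side 0 (a e) (a e + t * b e)" if "e \<in> E" for e
  proof (cases "a e * b e < 0")
    case True
    with t_le[OF that True] show ?thesis
      unfolding stays_on_side_def
      by (auto simp: mult_less_0_iff field_simps)
  next
    case False
    then have "0 \<le> a e * (t * b e)" using \<open>0 < t\<close> by (simp add: mult.left_commute)
    with fixed[OF that] show ?thesis
      unfolding stays_on_side_def by (auto simp: zero_le_mult_iff)
  qed
  moreover have "a e1 \<noteq> 0 \<and> a e1 + t * b e1 = 0" using e1 by auto
  ultimately show ?thesis using e1(1) by blast
qed

lemma exists_sign_decreasing:
  fixes a v :: "'i \<Rightarrow> real"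
  assumes "T \<subseteq> I" "i \<in> I" "a i * v i \<noteq> 0"
  shows "\<exists>s\<in>{1, -1}. s * (\<Sum>j\<in>T. sgn (a j) * v j) \<le> 0 \<and> (\<exists>j\<in>I. a j * (s * v j) < 0)"
proof (cases "(\<Sum>j\<in>T. sgn (a j) * v j) = 0")
  case True
  define s where "s = - sgn (a i * v i)"
  have "a i * (s * v i) = - \<bar>a i * v i\<bar>" unfolding s_def by (simp add: sgn_if abs_if)
  then have "a i * (s * v i) < 0" using assms(3) by simp
  moreover have "s \<in> {1, -1}" using assms(3) unfolding s_def by (auto simp: sgn_if)
  ultimately show ?thesis using True assms(2) by auto
next
  case False
  define s where "s = - sgn (\<Sum>j\<in>T. sgn (a j) * v j)"
  have descent: "s * (\<Sum>j\<in>T. sgn (a j) * v j) < 0"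
    using False unfolding s_def by (simp add: sgn_if)
  then have "(\<Sum>j\<in>T. sgn (a j) * (s * v j)) < 0"
    by (simp add: sum_distrib_left algebra_simps)
  then obtain j where "j \<in> T" "sgn (a j) * (s * v j) < 0"
    by (meson not_less sum_nonneg)
  then have "a j * (s * v j) < 0" by (auto simp: sgn_if mult_less_0_iff split: if_splits)
  moreover have "s \<in> {1, -1}" using False unfolding s_def by (auto simp: sgn_if)
  ultimately show ?thesis using \<open>j \<in> T\<close> assms(1) descent by force
qed

section \<open>Ratio inequalities\<close>

lemma min_div_le_add:
  fixes q k :: real
  assumes "0 \<le> q" "q \<le> 1" "0 < k"
  shows "min (q / k) 1 \<le> q + max 0 (1 - k)"
proof -
  consider "1 \<le> k" | "k < 1" "q \<le> k" | "k < 1" "k < q" by linarith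
  then show ?thesis
  proof cases
    case 1
    then have "q / k \<le> q" using assms by (simp add: divide_le_eq mult_le_cancel_left1)
    then show ?thesis by simp
  next
    case 2
    then have "q * (1 - k) \<le> k * (1 - k)" by (intro mult_right_mono) auto
    then have "q \<le> (q + (1 - k)) * k" by (simp add: algebra_simps)
    then have "q / k \<le> q + (1 - k)" by (simp add: pos_divide_le_eq[OF assms(3)])
    then show ?thesis by simp
  qed (use assms in auto)
qed

lemma le_min_mult_add:
  fixes w p :: real
  assumes "0 \<le> w" "w \<le> 1" "0 \<le> p"
  shows "w \<le> min (w * p) 1 + max 0 (1 - p)"
proof (cases "p \<le> 1")
  case True
  have "0 \<le> (1 - w) * (1 - p)" using assms(2) True by simp
  then have "w \<le> w * p + (1 - p)" by (simp add: algebra_simps)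
  moreover have "w * p \<le> 1" using assms True by (simp add: mult_le_one)
  ultimately show ?thesis using True by simp
next
  case False
  then have "w \<le> w * p" using assms(1) by (simp add: mult_le_cancel_left1)
  then show ?thesis using assms(2) by simp
qed

lemma abs_div_sub_one_le:
  fixes x c e :: real
  assumes "0 < c" "\<bar>x / c - 1\<bar> \<le> e"
  shows "x \<le> (1 + e) * c" "(1 - e) * c \<le> x"
proof -
  have "\<bar>x - c\<bar> \<le> e * c"
    using assms by (simp add: abs_le_iff field_simps)
  then show "x \<le> (1 + e) * c" "(1 - e) * c \<le> x" by (auto simp: algebra_simps)
qed

lemma one_sub_ratio_le:
  fixes a c e :: real
  assumes "0 < a" "0 < c" "\<bar>a / c - 1\<bar> \<le> e" "0 \<le> e"
  shows "1 - c / a \<le> e"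
proof -
  have "1 / (1 + e) \<le> c / a"
    using abs_div_sub_one_le(1)[OF assms(2,3)] assms(1,4) by (simp add: field_simps)
  moreover have "1 - e \<le> 1 / (1 + e)" using assms(4) by (simp add: field_simps)
  ultimately show ?thesis by simp
qed

lemma one_sub_ratio_le_twice:
  fixes a b c e :: real
  assumes "0 < a" "0 \<le> b" "0 < c" "\<bar>a / c - 1\<bar> \<le> e" "\<bar>b / c - 1\<bar> \<le> e" "0 \<le> e"
  shows "1 - b / a \<le> 2 * e"
proof (cases "e \<le> 1")
  case True
  have "1 / (1 + e) \<le> c / a"
    using abs_div_sub_one_le(1)[OF assms(3,4)] assms(1,6) by (simp add: field_simps)
  then have "(1 - e) * (1 / (1 + e)) \<le> (1 - e) * (c / a)" using True by (intro mult_left_mono) auto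
  moreover have "(1 - e) * c / a \<le> b / a"
    using abs_div_sub_one_le(2)[OF assms(3,5)] assms(1) by (simp add: divide_right_mono)
  moreover have "1 - 2 * e \<le> (1 - e) / (1 + e)" using assms(6) by (simp add: field_simps)
  ultimately show ?thesis by simp
next
  case False
  moreover have "0 \<le> b / a" using assms(1,2) by simp
  ultimately show ?thesis by linarith
qed

lemma div01_between:
  assumes "(0 \<le> g \<and> g \<le> r) \<or> (r \<le> g \<and> g \<le> 0)"
  shows "0 \<le> div01 g r" "div01 g r \<le> 1" "div01 g r * r = g"
  using assms unfolding div01_def by (auto simp: zero_le_divide_iff divide_le_eq_1)

definition signed_fraction :: "real \<Rightarrow> real \<Rightarrow> real \<Rightarrow> bool" where
  "signed_fraction g r0 r \<longleftrightarrow> (0 \<le> r0 \<and> 0 \<le> g \<and> g \<le> r) \<or> (r0 \<le> 0 \<and> r \<le> g \<and> g \<le> 0)"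

lemma signed_fraction_between:
  "signed_fraction g r0 r \<Longrightarrow> (0 \<le> g \<and> g \<le> r) \<or> (r \<le> g \<and> g \<le> 0)"
  unfolding signed_fraction_def by auto

lemma signed_fraction_div: "signed_fraction g r0 r \<Longrightarrow> g / r0 = \<bar>g\<bar> / \<bar>r0\<bar>"
  unfolding signed_fraction_def by (auto simp: abs_if divide_simps)

lemma signed_fraction_div01: "signed_fraction g r0 r \<Longrightarrow> r \<noteq> 0 \<Longrightarrow> div01 g r = \<bar>g\<bar> / \<bar>r\<bar>"
  unfolding signed_fraction_def div01_def by (auto simp: abs_if divide_simps)

lemma signed_fraction_div01_zero: "signed_fraction g r0 0 \<Longrightarrow> div01 g 0 = 1"
  unfolding signed_fraction_def div01_def by auto

lemma signed_fraction_abs_le: "signed_fraction g r0 r \<Longrightarrow> \<bar>g\<bar> \<le> \<bar>r\<bar>"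
  unfolding signed_fraction_def by auto

lemma min_div_le_div01_add:
  assumes frac: "signed_fraction g r0 r" and "r0 \<noteq> 0" and r_ne: "r \<noteq> 0"
  shows "min (g / r0) 1 \<le> div01 g r + max 0 (1 - \<bar>r0\<bar> / \<bar>r\<bar>)"
proof -
  have "g / r0 = (\<bar>g\<bar> / \<bar>r\<bar>) / (\<bar>r0\<bar> / \<bar>r\<bar>)"
    using signed_fraction_div[OF frac] r_ne by simp
  moreover have "\<bar>g\<bar> / \<bar>r\<bar> \<le> 1" using signed_fraction_abs_le[OF frac] by (simp add: divide_le_eq_1)
  ultimately show ?thesis
    using min_div_le_add[of "\<bar>g\<bar> / \<bar>r\<bar>" "\<bar>r0\<bar> / \<bar>r\<bar>"] signed_fraction_div01[OF frac r_ne] r_ne \<open>r0 \<noteq> 0\<close>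
    by simp
qed

lemma min_div_mult_sq_le:
  assumes frac: "signed_fraction g r0 r" and "\<bar>r0\<bar> = M" "M \<le> \<bar>r\<bar>" "0 < M"
  shows "min (g / r0) 1 * M\<^sup>2 \<le> div01 g r * r\<^sup>2"
proof -
  have "r \<noteq> 0" using assms by auto
  have "min (g / r0) 1 * M\<^sup>2 \<le> \<bar>g\<bar> / M * M\<^sup>2"
    using signed_fraction_div[OF frac] assms(2,4) by (intro mult_right_mono) auto
  also have "\<dots> = \<bar>g\<bar> * M" using assms(4) by (simp add: power2_eq_square)
  also have "\<dots> \<le> \<bar>g\<bar> * \<bar>r\<bar>" using assms(3) by (simp add: mult_left_mono)
  also have "\<dots> = \<bar>g\<bar> / \<bar>r\<bar> * (\<bar>r\<bar> * \<bar>r\<bar>)" using \<open>r \<noteq> 0\<close> by (simp del: abs_mult_self_eq)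
  also have "\<dots> = div01 g r * r\<^sup>2"
    using signed_fraction_div01[OF frac \<open>r \<noteq> 0\<close>] by (simp add: power2_eq_square)
  finally show ?thesis .
qed

lemma le_min_mult_div_add:
  fixes w rs r0 :: real
  assumes "0 \<le> w" "w \<le> 1" "0 < rs * r0"
  shows "w \<le> min (w * rs / r0) 1 + max 0 (1 - \<bar>rs\<bar> / \<bar>r0\<bar>)"
proof -
  have "rs / r0 = \<bar>rs\<bar> / \<bar>r0\<bar>" using assms(3) by (auto simp: zero_less_mult_iff)
  then have "w * rs / r0 = w * (\<bar>rs\<bar> / \<bar>r0\<bar>)" by (metis times_divide_eq_right)
  then show ?thesis using le_min_mult_add[OF assms(1,2), of "\<bar>rs\<bar> / \<bar>r0\<bar>"] by simp
qed

section \<open>Comparing the weights of V and of Vhat\<close>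

(* rs, r0 and rh are the residuals at lamstar, at lam0 R and at lamhat R for the cell R of
   lamstar; w is wstar and g is ghat R. *)
locale weight_transfer =
  fixes n :: nat and eps tau M :: real and rs r0 rh w g :: "nat \<Rightarrow> real"
  assumes tau_pos: "0 < tau" and M_pos: "0 < M" and eps_nonneg: "0 \<le> eps"
    and w_range: "\<And>i. i < n \<Longrightarrow> 0 \<le> w i \<and> w i \<le> 1"
    and w_fit: "(\<Sum>i<n. w i * (rs i)\<^sup>2) \<le> M\<^sup>2"
    and u_fit: "(\<Sum>i<n. div01 (g i) (rh i) * (rh i)\<^sup>2) \<le> M\<^sup>2"
    and fraction: "\<And>i. i < n \<Longrightarrow> signed_fraction (g i) (r0 i) (rh i)"
    and r0_follows: "\<And>i c. i < n \<Longrightarrow> c \<in> {0, M, -M, tau, -tau} \<Longrightarrow> stays_on_side c (rs i) (r0 i)"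
    and rh_follows: "\<And>i c. i < n \<Longrightarrow> c \<in> {0, M, -M, tau, -tau} \<Longrightarrow> stays_on_side c (rs i) (rh i)"
begin

definition "u i = div01 (g i) (rh i)"

(* A is the index set of the objective, [n] minus B_M and B_deltaM at lam0 R; small is
   B_deltaM at lam0 R and large is B_M at lamstar. *)
definition "A = {i. i < n \<and> tau \<le> \<bar>r0 i\<bar> \<and> \<bar>r0 i\<bar> \<le> M}"

definition "A_below = {i \<in> A. \<bar>rs i\<bar> \<le> tau}"

definition "A_above = {i \<in> A. M < \<bar>rs i\<bar>}"

definition "unstable r = {i. i < n \<and> tau < \<bar>rs i\<bar> \<and> \<bar>rs i\<bar> \<le> M \<and> eps < \<bar>\<bar>r i\<bar> / \<bar>rs i\<bar> - 1\<bar>}"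

definition "small = {i. i < n \<and> \<bar>r0 i\<bar> < tau}"

definition "large = {i. i < n \<and> M < \<bar>rs i\<bar>}"

lemma u_range: "i < n \<Longrightarrow> 0 \<le> u i \<and> u i \<le> 1"
  unfolding u_def using div01_between(1,2)[OF signed_fraction_between[OF fraction]] by simp

lemma A_subset: "A \<subseteq> {..<n}"
  unfolding A_def by auto

lemma finite_A: "finite A"
  using A_subset finite_subset by blast

lemma A_sign: "i \<in> A \<Longrightarrow> 0 < rs i * r0 i"
proof -
  assume "i \<in> A"
  then have "i < n" "r0 i \<noteq> 0" unfolding A_def using tau_pos by auto
  moreover have side: "stays_on_side 0 (rs i) (r0 i)" using r0_follows \<open>i < n\<close> by simp
  ultimately have "rs i \<noteq> 0" unfolding stays_on_side_def by auto
  then show ?thesis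
    using stays_on_side_zero_mult_nonneg[OF side] \<open>r0 i \<noteq> 0\<close> by (simp add: order_le_less)
qed

lemma ratio_deficit_le:
  assumes "i \<in> A"
  shows "max 0 (1 - \<bar>rs i\<bar> / \<bar>r0 i\<bar>)
           \<le> eps + of_bool (i \<in> unstable r0) + (1 - \<bar>rs i\<bar> / tau) * of_bool (i \<in> A_below)"
proof -
  have i: "i < n" "tau \<le> \<bar>r0 i\<bar>" "\<bar>r0 i\<bar> \<le> M" using assms unfolding A_def by auto
  note r0_abs = stays_on_side_abs[OF r0_follows[OF i(1)] r0_follows[OF i(1)]]
  consider "\<bar>rs i\<bar> \<le> tau" | "tau < \<bar>rs i\<bar>" "\<bar>rs i\<bar> \<le> M" | "M < \<bar>rs i\<bar>" by linarith
  then show ?thesis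
  proof cases
    case 1
    then have "\<bar>r0 i\<bar> = tau" using r0_abs(1) i by force
    moreover have "i \<in> A_below" using 1 assms unfolding A_below_def by simp
    moreover have "\<bar>rs i\<bar> / tau \<le> 1" using 1 tau_pos by simp
    ultimately show ?thesis using eps_nonneg by simp
  next
    case 2
    then have "i \<notin> A_below" unfolding A_below_def by simp
    have "max 0 (1 - \<bar>rs i\<bar> / \<bar>r0 i\<bar>) \<le> eps + of_bool (i \<in> unstable r0)"
    proof (cases "i \<in> unstable r0")
      case False
      then have "\<bar>\<bar>r0 i\<bar> / \<bar>rs i\<bar> - 1\<bar> \<le> eps" using 2 i unfolding unstable_def by auto
      then have "1 - \<bar>rs i\<bar> / \<bar>r0 i\<bar> \<le> eps"
        using one_sub_ratio_le 2 i(2) tau_pos eps_nonneg by simp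
      then show ?thesis using eps_nonneg by simp
    next
      case True
      have "max 0 (1 - \<bar>rs i\<bar> / \<bar>r0 i\<bar>) \<le> 1" by simp
      moreover have "of_bool (i \<in> unstable r0) = (1::real)" using True by simp
      ultimately show ?thesis using eps_nonneg by linarith
    qed
    then show ?thesis using \<open>i \<notin> A_below\<close> by simp
  next
    case 3
    then have "i \<notin> A_below" using i tau_pos unfolding A_below_def by simp
    moreover have "1 \<le> \<bar>rs i\<bar> / \<bar>r0 i\<bar>" using 3 i tau_pos by simp
    ultimately show ?thesis using eps_nonneg by simp
  qed
qed

lemma objective_term_le:
  assumes "i \<in> A"
  defines "t \<equiv> min (g i / r0 i) 1"
  shows "t \<le> u i + 2 * eps + of_bool (i \<in> unstable r0) + of_bool (i \<in> unstable rh)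
              + t * of_bool (i \<in> A_above)"
proof -
  have i: "i < n" "tau \<le> \<bar>r0 i\<bar>" "\<bar>r0 i\<bar> \<le> M" using assms unfolding A_def by auto
  have "r0 i \<noteq> 0" using i tau_pos by auto
  have t01: "0 \<le> t" "t \<le> 1" unfolding t_def using signed_fraction_div[OF fraction[OF i(1)]] by auto
  have "0 \<le> u i" using u_range i by blast
  have extra: "0 \<le> of_bool (i \<in> unstable r0) + of_bool (i \<in> unstable rh) + t * of_bool (i \<in> A_above)"
    using t01 by simp
  have key: "t \<le> u i + max 0 (1 - \<bar>r0 i\<bar> / \<bar>rh i\<bar>)" if "rh i \<noteq> 0"
    unfolding t_def u_def using min_div_le_div01_add[OF fraction[OF i(1)] \<open>r0 i \<noteq> 0\<close> that] .
  note rh_abs = stays_on_side_abs[OF rh_follows[OF i(1)] rh_follows[OF i(1)]]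
  consider "rh i = 0" | "M < \<bar>rs i\<bar>" | "i \<in> unstable r0 \<or> i \<in> unstable rh"
    | "rh i \<noteq> 0" "\<bar>rs i\<bar> \<le> tau"
    | "rh i \<noteq> 0" "tau < \<bar>rs i\<bar>" "\<bar>rs i\<bar> \<le> M" "i \<notin> unstable r0" "i \<notin> unstable rh"
    by linarith
  then show ?thesis
  proof cases
    case 1
    then have "u i = 1" unfolding u_def using signed_fraction_div01_zero fraction[OF i(1)] by simp
    then show ?thesis using t01 extra eps_nonneg by linarith
  next
    case 2
    then have "i \<in> A_above" using assms(1) unfolding A_above_def by simp
    moreover have "0 \<le> of_bool (i \<in> unstable r0) + (of_bool (i \<in> unstable rh) :: real)" by simp
    ultimately show ?thesis using \<open>0 \<le> u i\<close> eps_nonneg by simp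
  next
    case 3
    then have "1 \<le> of_bool (i \<in> unstable r0) + (of_bool (i \<in> unstable rh) :: real)" by auto
    then show ?thesis using \<open>0 \<le> u i\<close> eps_nonneg t01 by simp
  next
    case 4
    then have "\<bar>rh i\<bar> \<le> \<bar>r0 i\<bar>" using rh_abs(1) i by force
    then have "t \<le> u i" using key[OF 4(1)] 4(1) by simp
    then show ?thesis using extra eps_nonneg by linarith
  next
    case 5
    have "\<bar>\<bar>rh i\<bar> / \<bar>rs i\<bar> - 1\<bar> \<le> eps" "\<bar>\<bar>r0 i\<bar> / \<bar>rs i\<bar> - 1\<bar> \<le> eps"
      using 5 i unfolding unstable_def by auto
    then have "1 - \<bar>r0 i\<bar> / \<bar>rh i\<bar> \<le> 2 * eps"
      using one_sub_ratio_le_twice[of "\<bar>rh i\<bar>" "\<bar>r0 i\<bar>" "\<bar>rs i\<bar>"] 5(1,2) tau_pos eps_nonneg by simp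
    then have "t \<le> u i + 2 * eps" using key[OF 5(1)] eps_nonneg by simp
    then show ?thesis using extra by linarith
  qed
qed

lemma sum_w_A_le:
  "(\<Sum>i\<in>A. w i) \<le> (\<Sum>i\<in>A. min (w i * rs i / r0 i) 1) + eps * card A
     + card (A \<inter> unstable r0) + (\<Sum>i\<in>A_below. 1 - \<bar>rs i\<bar> / tau)"
proof -
  have "(\<Sum>i\<in>A. w i) \<le> (\<Sum>i\<in>A. min (w i * rs i / r0 i) 1 + eps + of_bool (i \<in> unstable r0)
          + (1 - \<bar>rs i\<bar> / tau) * of_bool (i \<in> A_below))"
  proof (rule sum_mono)
    fix i assume "i \<in> A"
    then have "w i \<le> min (w i * rs i / r0 i) 1 + max 0 (1 - \<bar>rs i\<bar> / \<bar>r0 i\<bar>)"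
      using le_min_mult_div_add w_range A_sign A_subset by blast
    then show "w i \<le> min (w i * rs i / r0 i) 1 + eps + of_bool (i \<in> unstable r0)
          + (1 - \<bar>rs i\<bar> / tau) * of_bool (i \<in> A_below)"
      using ratio_deficit_le[OF \<open>i \<in> A\<close>] by linarith
  qed
  also have "\<dots> = (\<Sum>i\<in>A. min (w i * rs i / r0 i) 1) + eps * card A
     + card (A \<inter> unstable r0) + (\<Sum>i\<in>A_below. 1 - \<bar>rs i\<bar> / tau)"
    using finite_A by (simp add: sum.distrib Int_absorb1 A_below_def Collect_conj_eq)
  finally show ?thesis .
qed

lemma sum_objective_A_le:
  "(\<Sum>i\<in>A. min (g i / r0 i) 1) \<le> (\<Sum>i\<in>A. u i) + 2 * eps * card A
     + card (A \<inter> unstable r0) + card (A \<inter> unstable rh) + (\<Sum>i\<in>A_above. min (g i / r0 i) 1)"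
proof -
  have "(\<Sum>i\<in>A. min (g i / r0 i) 1) \<le> (\<Sum>i\<in>A. u i + 2 * eps + of_bool (i \<in> unstable r0)
          + of_bool (i \<in> unstable rh) + min (g i / r0 i) 1 * of_bool (i \<in> A_above))"
    by (rule sum_mono) (rule objective_term_le)
  also have "\<dots> = (\<Sum>i\<in>A. u i) + 2 * eps * card A
     + card (A \<inter> unstable r0) + card (A \<inter> unstable rh) + (\<Sum>i\<in>A_above. min (g i / r0 i) 1)"
    using finite_A by (simp add: sum.distrib Int_absorb1 A_above_def Collect_conj_eq)
  finally show ?thesis .
qed

lemma sum_large_w_le: "(\<Sum>i\<in>large. w i) \<le> 1"
proof -
  have "(\<Sum>i\<in>large. w i) * M\<^sup>2 \<le> (\<Sum>i\<in>large. w i * (rs i)\<^sup>2)"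
    unfolding sum_distrib_right
  proof (rule sum_mono)
    fix i assume "i \<in> large"
    then have "i < n" "M < \<bar>rs i\<bar>" unfolding large_def by auto
    then have "M\<^sup>2 \<le> (rs i)\<^sup>2" using power_mono[of M "\<bar>rs i\<bar>" 2] M_pos by simp
    then show "w i * M\<^sup>2 \<le> w i * (rs i)\<^sup>2" using w_range \<open>i < n\<close> by (simp add: mult_left_mono)
  qed
  also have "\<dots> \<le> (\<Sum>i<n. w i * (rs i)\<^sup>2)"
    using w_range by (intro sum_mono2) (auto simp: large_def)
  also have "\<dots> \<le> M\<^sup>2" by (rule w_fit)
  finally show ?thesis using M_pos by simp
qed

lemma sum_objective_A_above_le: "(\<Sum>i\<in>A_above. min (g i / r0 i) 1) \<le> 1"
proof -
  have "(\<Sum>i\<in>A_above. min (g i / r0 i) 1) * M\<^sup>2 \<le> (\<Sum>i\<in>A_above. u i * (rh i)\<^sup>2)"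
    unfolding sum_distrib_right
  proof (rule sum_mono)
    fix i assume "i \<in> A_above"
    then have i: "i < n" "\<bar>r0 i\<bar> \<le> M" "M < \<bar>rs i\<bar>" unfolding A_above_def A_def by auto
    have "M \<le> \<bar>r0 i\<bar>" "M \<le> \<bar>rh i\<bar>"
      using stays_on_side_abs(2)[OF r0_follows[OF i(1)] r0_follows[OF i(1)]]
        stays_on_side_abs(2)[OF rh_follows[OF i(1)] rh_follows[OF i(1)]] i(3) by simp_all
    then have "\<bar>r0 i\<bar> = M" "M \<le> \<bar>rh i\<bar>" using i(2) by simp_all
    then show "min (g i / r0 i) 1 * M\<^sup>2 \<le> u i * (rh i)\<^sup>2"
      unfolding u_def by (rule min_div_mult_sq_le[OF fraction[OF i(1)] _ _ M_pos])
  qed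
  also have "\<dots> \<le> (\<Sum>i<n. u i * (rh i)\<^sup>2)"
    using u_range by (intro sum_mono2) (auto simp: A_above_def A_def)
  also have "\<dots> \<le> M\<^sup>2" using u_fit unfolding u_def .
  finally show ?thesis using M_pos by simp
qed

lemma sum_w_le_split: "(\<Sum>i<n. w i) \<le> (\<Sum>i\<in>A. w i) + card small + (\<Sum>i\<in>large. w i)"
proof -
  have "(\<Sum>i<n. w i) \<le> (\<Sum>i<n. w i * of_bool (i \<in> A) + of_bool (i \<in> small) + w i * of_bool (i \<in> large))"
  proof (rule sum_mono)
    fix i assume "i \<in> {..<n}"
    then have i: "i < n" "0 \<le> w i" "w i \<le> 1" using w_range by auto
    have "i \<in> A \<or> i \<in> small \<or> i \<in> large"
      using stays_on_side_abs(1)[OF r0_follows[OF i(1)] r0_follows[OF i(1)], of M] i(1)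
      unfolding A_def small_def large_def by auto
    then show "w i \<le> w i * of_bool (i \<in> A) + of_bool (i \<in> small) + w i * of_bool (i \<in> large)"
      using i by auto
  qed
  also have "\<dots> = (\<Sum>i\<in>A. w i) + card small + (\<Sum>i\<in>large. w i)"
    by (simp add: sum.distrib Int_absorb1 A_def small_def large_def Collect_conj_eq lessThan_def)
  finally show ?thesis .
qed

lemma sum_w_le_sum_u:
  assumes optimal: "(\<Sum>i\<in>A. min (w i * rs i / r0 i) 1) \<le> (\<Sum>i\<in>A. min (g i / r0 i) 1)"
    and few_unstable: "card (unstable r0) \<le> eps * n" "card (unstable rh) \<le> eps * n"
    and few_small: "card small \<le> eps * n"
    and below: "(\<Sum>i\<in>A_below. 1 - \<bar>rs i\<bar> / tau) \<le> eps * n"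
    and rigid: "eps * n < 1 \<Longrightarrow> \<forall>i<n. r0 i = rs i"
  shows "(\<Sum>i<n. w i) \<le> (\<Sum>i<n. u i) + 9 * eps * n + 1"
proof -
  (* The least-squares fit bounds this sum by 1, which is at most eps n unless eps n < 1;
     then A_above is empty. *)
  have above: "(\<Sum>i\<in>A_above. min (g i / r0 i) 1) \<le> eps * n"
  proof (cases "eps * n < 1")
    case True
    then have "A_above = {}" using rigid unfolding A_above_def A_def by force
    then show ?thesis using eps_nonneg by simp
  next
    case False
    then show ?thesis using sum_objective_A_above_le by linarith
  qed
  have "card (A \<inter> unstable r) \<le> card (unstable r)" for r
    by (rule card_mono) (auto simp: unstable_def)
  then have "card (A \<inter> unstable r0) \<le> eps * n" "card (A \<inter> unstable rh) \<le> eps * n"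
    using few_unstable of_nat_mono by (metis order_trans)+
  moreover have "eps * card A \<le> eps * n"
    using card_mono[OF _ A_subset] eps_nonneg by (simp add: mult_left_mono)
  moreover have "(\<Sum>i\<in>A. u i) \<le> (\<Sum>i<n. u i)"
    using u_range A_subset by (intro sum_mono2) auto
  ultimately show ?thesis
    using sum_w_le_split sum_large_w_le sum_w_A_le sum_objective_A_le optimal few_small below above
    by linarith
qed

end

lemma sum_le_sum_div01_of_exact_fit:
  fixes rs r0 rh w g :: "nat \<Rightarrow> real"
  assumes w_range: "\<And>i. i < n \<Longrightarrow> 0 \<le> w i \<and> w i \<le> 1"
    and exact: "(\<Sum>i<n. w i * (rs i)\<^sup>2) \<le> 0"
    and follows: "\<And>i. i < n \<Longrightarrow> stays_on_side 0 (rs i) (rh i)"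
    and fraction: "\<And>i. i < n \<Longrightarrow> signed_fraction (g i) (r0 i) (rh i)"
  shows "(\<Sum>i<n. w i) \<le> (\<Sum>i<n. div01 (g i) (rh i))"
proof (rule sum_mono)
  fix i assume "i \<in> {..<n}"
  then have i: "i < n" by simp
  have nonneg: "0 \<le> w j * (rs j)\<^sup>2" if "j \<in> {..<n}" for j using w_range that by simp
  then have "(\<Sum>i<n. w i * (rs i)\<^sup>2) = 0" using exact sum_nonneg[of "{..<n}"] by (meson antisym)
  then have "w i * (rs i)\<^sup>2 = 0" using sum_nonneg_eq_0_iff[OF finite_lessThan nonneg] i by simp
  then have "w i = 0 \<or> rs i = 0" by simp
  moreover have "div01 (g i) (rh i) = 1" if "rs i = 0"
  proof -
    have "rh i = 0" using follows[OF i] that unfolding stays_on_side_def by simp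
    then show ?thesis using signed_fraction_div01_zero fraction[OF i] by simp
  qed
  moreover have "0 \<le> div01 (g i) (rh i)" "w i \<le> 1"
    using w_range[OF i] div01_between(1)[OF signed_fraction_between[OF fraction[OF i]]] by simp_all
  ultimately show "w i \<le> div01 (g i) (rh i)" by fastforce
qed

section \<open>Cells of the arrangement\<close>

lemma resid_affine:
  "resid X y d (\<lambda>j. a j + t * (b j - a j)) i = resid X y d a i + t * (resid X y d b i - resid X y d a i)"
  unfolding resid_def by (simp add: algebra_simps sum.distrib sum_subtractf sum_distrib_left)

lemma vecs_affine: "a \<in> vecs k \<Longrightarrow> b \<in> vecs k \<Longrightarrow> (\<lambda>j. a j + t * (b j - a j)) \<in> vecs k"
  unfolding vecs_def by auto

definition sign_pattern :: "(nat \<Rightarrow> nat \<Rightarrow> real) \<Rightarrow> (nat \<Rightarrow> real) \<Rightarrow> nat \<Rightarrow> (nat \<Rightarrow> real) \<Rightarrow> nat \<times> real \<Rightarrow> int" where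
  "sign_pattern X y d lam e = (if resid X y d lam (fst e) = snd e then 0
       else if resid X y d lam (fst e) < snd e then -1 else 1)"

abbreviation cell :: "(nat \<Rightarrow> nat \<Rightarrow> real) \<Rightarrow> (nat \<Rightarrow> real) \<Rightarrow> nat \<Rightarrow> (nat \<times> real) set \<Rightarrow> (nat \<Rightarrow> real) \<Rightarrow> (nat \<Rightarrow> real) set" where
  "cell X y d E lam \<equiv> region X y d E (sign_pattern X y d lam)"

lemma mem_cell_iff:
  "mu \<in> cell X y d E lam \<longleftrightarrow> mu \<in> vecs (d - 1) \<and>
     (\<forall>(i, c)\<in>E. stays_on_side c (resid X y d lam i) (resid X y d mu i))"
  unfolding region_def sign_pattern_def stays_on_side_def by auto

lemma cell_self: "lam \<in> vecs (d - 1) \<Longrightarrow> lam \<in> cell X y d E lam"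
  unfolding mem_cell_iff stays_on_side_def by auto

lemma satisfiable_sign_pattern: "lam \<in> vecs (d - 1) \<Longrightarrow> satisfiable X y d E (sign_pattern X y d lam)"
  unfolding satisfiable_def sign_pattern_def by (auto intro!: bexI[of _ lam])

lemma cell_in_regions: "lam \<in> vecs (d - 1) \<Longrightarrow> cell X y d E lam \<in> regions X y d E"
  unfolding regions_def using satisfiable_sign_pattern by blast

lemma region_subset_vecs: "region X y d E s \<subseteq> vecs (d - 1)"
  unfolding region_def by auto

lemma regions_subset_vecs: "R \<in> regions X y d E \<Longrightarrow> R \<subseteq> vecs (d - 1)"
  unfolding regions_def using region_subset_vecs by blast

lemma cell_mono: "mu \<in> cell X y d E lam \<Longrightarrow> cell X y d E mu \<subseteq> cell X y d E lam"
  unfolding mem_cell_iff subset_iff by (fast intro: stays_on_side_trans)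

lemma cell_subset_region:
  assumes "satisfiable X y d E s" "lam \<in> region X y d E s"
  shows "cell X y d E lam \<subseteq> region X y d E s"
proof
  fix mu assume mu: "mu \<in> cell X y d E lam"
  have "s e \<in> {-1, 0, 1}" if "e \<in> E" for e using assms(1) that unfolding satisfiable_def by blast
  with assms(2) mu show "mu \<in> region X y d E s"
    unfolding mem_cell_iff unfolding region_def stays_on_side_def by fastforce
qed

lemma finite_BdM: "finite (BdM X y n d M delta lam)"
  unfolding BdM_def by simp

lemma finite_regions:
  assumes "finite E"
  shows "finite (regions X y d E)"
proof -
  have "regions X y d E \<subseteq> region X y d E ` (E \<rightarrow>\<^sub>E {-1, 0, 1})"
  proof
    fix R assume "R \<in> regions X y d E"
    then obtain s where s: "satisfiable X y d E s" "R = region X y d E s"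
      unfolding regions_def by auto
    have "R = region X y d E (restrict s E)"
      unfolding s(2) region_def by (auto simp: restrict_def)
    moreover have "restrict s E \<in> E \<rightarrow>\<^sub>E {-1, 0, 1}"
      using s(1) unfolding satisfiable_def by auto
    ultimately show "R \<in> region X y d E ` (E \<rightarrow>\<^sub>E {-1, 0, 1})" by blast
  qed
  moreover have "finite (E \<rightarrow>\<^sub>E {-1::int, 0, 1})"
    using assms by (intro finite_PiE) auto
  ultimately show ?thesis using finite_subset by blast
qed

lemma finite_eqns:
  assumes "S \<subseteq> {..<n}"
  shows "finite (eqns n M eps delta S)"
proof -
  define K where "K = nat \<lceil>log (1 + eps) (sqrt n / delta)\<rceil>"
  define f where "f k = (1 + eps) ^ k * delta * M / sqrt n" for k :: nat
  have "eqns n M eps delta S \<subseteq> {..<n} \<times> ({0, M, - M, delta * M / sqrt n, - (delta * M / sqrt n)}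
          \<union> f ` {..K} \<union> uminus ` f ` {..K})"
  proof
    fix e assume "e \<in> eqns n M eps delta S"
    moreover have "k \<le> K" if "int k \<le> \<lceil>log (1 + eps) (sqrt n / delta)\<rceil>" for k
      using that unfolding K_def by linarith
    ultimately show "e \<in> {..<n} \<times> ({0, M, - M, delta * M / sqrt n, - (delta * M / sqrt n)}
          \<union> f ` {..K} \<union> uminus ` f ` {..K})"
      using assms unfolding eqns_def f_def by auto
  qed
  then show ?thesis by (rule finite_subset) auto
qed

section \<open>Descent to a vertex\<close>

(* A vertex modulo the kernel of the reduced design matrix: its cell is a single point in
   residual space. *)
definition is_vertex :: "(nat \<Rightarrow> nat \<Rightarrow> real) \<Rightarrow> (nat \<Rightarrow> real) \<Rightarrow> nat \<Rightarrow> nat \<Rightarrow> (nat \<times> real) set \<Rightarrow> (nat \<Rightarrow> real) \<Rightarrow> bool" where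
  "is_vertex X y n d E mu \<longleftrightarrow> (\<forall>nu\<in>cell X y d E mu. \<forall>i<n. resid X y d nu i = resid X y d mu i)"

definition slack :: "(nat \<Rightarrow> nat \<Rightarrow> real) \<Rightarrow> (nat \<Rightarrow> real) \<Rightarrow> nat \<Rightarrow> (nat \<times> real) set \<Rightarrow> (nat \<Rightarrow> real) \<Rightarrow> (nat \<times> real) set" where
  "slack X y d E lam = {e \<in> E. resid X y d lam (fst e) \<noteq> snd e}"

lemma cell_abs_resid:
  "mu \<in> cell X y d E lam \<Longrightarrow> (i, 0) \<in> E \<Longrightarrow> \<bar>resid X y d mu i\<bar> = sgn (resid X y d lam i) * resid X y d mu i"
  unfolding mem_cell_iff using stays_on_side_zero_abs by fastforce

lemma exists_line_step:
  assumes "finite E" and zeros: "\<And>i. i < n \<Longrightarrow> (i, 0) \<in> E"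
    and "lam \<in> vecs (d - 1)" "nu \<in> vecs (d - 1)"
    and tight: "\<And>i c. (i, c) \<in> E \<Longrightarrow> resid X y d lam i = c \<Longrightarrow> resid X y d nu i = c"
    and "j < n" "resid X y d lam j * (s * (resid X y d nu j - resid X y d lam j)) < 0"
  shows "\<exists>t>0. (\<lambda>k. lam k + (t * s) * (nu k - lam k)) \<in> cell X y d E lam
               \<and> slack X y d E (\<lambda>k. lam k + (t * s) * (nu k - lam k)) \<subset> slack X y d E lam"
proof -
  let ?r = "resid X y d"
  define a where "a e = ?r lam (fst e) - snd e" for e :: "nat \<times> real"
  define b where "b e = s * (?r nu (fst e) - ?r lam (fst e))" for e :: "nat \<times> real"
  have "(j, 0) \<in> E" using zeros assms(6) .
  moreover have "a (j, 0) * b (j, 0) < 0" using assms(7) unfolding a_def b_def by simp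
  moreover have "b e = 0" if "e \<in> E" "a e = 0" for e
    using tight[of "fst e" "snd e"] that unfolding a_def b_def by simp
  ultimately obtain t where "0 < t" and side: "\<forall>e\<in>E. stays_on_side 0 (a e) (a e + t * b e)"
    and hit: "\<exists>e\<in>E. a e \<noteq> 0 \<and> a e + t * b e = 0"
    using exists_first_crossing[OF assms(1)] by blast
  define mu where "mu k = lam k + (t * s) * (nu k - lam k)" for k
  have r_mu: "?r mu (fst e) - snd e = a e + t * b e" for e
    unfolding mu_def a_def b_def resid_affine by (simp add: algebra_simps)
  have "stays_on_side c (?r lam i) (?r mu i)" if "(i, c) \<in> E" for i c
  proof -
    have "stays_on_side 0 (a (i, c)) (a (i, c) + t * b (i, c))" using side that by blast
    then show ?thesis unfolding stays_on_side_shift[of c] r_mu[of "(i, c)", symmetric]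
      by (simp add: a_def)
  qed
  then have "mu \<in> cell X y d E lam"
    unfolding mem_cell_iff mu_def using vecs_affine[OF assms(3,4)] by auto
  moreover have "slack X y d E mu \<subset> slack X y d E lam"
  proof -
    have "e \<in> slack X y d E lam" if "e \<in> slack X y d E mu" for e
    proof -
      have "e \<in> E" "a e + t * b e \<noteq> 0" using that r_mu[of e] unfolding slack_def by auto
      then have "a e \<noteq> 0" using side unfolding stays_on_side_def by auto
      then show ?thesis using \<open>e \<in> E\<close> unfolding slack_def a_def by auto
    qed
    then have "slack X y d E mu \<subseteq> slack X y d E lam" by blast
    moreover have "\<not> slack X y d E lam \<subseteq> slack X y d E mu"
      using hit r_mu unfolding slack_def a_def by auto
    ultimately show ?thesis by blast
  qed
  ultimately show ?thesis using \<open>0 < t\<close> unfolding mu_def by blast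
qed

(* Inside the cell no residual changes sign, so the sum of the |r_i| is affine along the line
   through lam and nu: move in the direction in which it does not increase until a further
   equation of E becomes tight. *)
lemma exists_descent_step:
  assumes "finite E" and zeros: "\<And>i. i < n \<Longrightarrow> (i, 0) \<in> E" and "T \<subseteq> {..<n}"
    and "lam \<in> vecs (d - 1)" "\<not> is_vertex X y n d E lam"
  shows "\<exists>mu\<in>cell X y d E lam. card (slack X y d E mu) < card (slack X y d E lam)
           \<and> (\<Sum>i\<in>T. \<bar>resid X y d mu i\<bar>) \<le> (\<Sum>i\<in>T. \<bar>resid X y d lam i\<bar>)"
proof -
  let ?r = "resid X y d"
  obtain nu i where nu: "nu \<in> cell X y d E lam" "i < n" "?r nu i \<noteq> ?r lam i"
    using assms(5) unfolding is_vertex_def by blast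
  define D where "D k = ?r nu k - ?r lam k" for k
  have tight: "?r nu k = c" if "(k, c) \<in> E" "?r lam k = c" for k c
    using nu(1) that unfolding mem_cell_iff stays_on_side_def by fastforce
  have "?r lam i * D i \<noteq> 0" using tight[of i 0] zeros nu(2,3) unfolding D_def by auto
  then have "\<exists>s\<in>{1, -1}. s * (\<Sum>k\<in>T. sgn (?r lam k) * D k) \<le> 0 \<and> (\<exists>j\<in>{..<n}. ?r lam j * (s * D j) < 0)"
    using assms(3) nu(2) by (intro exists_sign_decreasing) auto
  then obtain s j where s: "s * (\<Sum>k\<in>T. sgn (?r lam k) * D k) \<le> 0"
    and j: "j < n" "?r lam j * (s * D j) < 0"
    by blast
  have "nu \<in> vecs (d - 1)" using nu(1) region_subset_vecs by blast
  then obtain t where "0 < t"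
    and step: "(\<lambda>k. lam k + (t * s) * (nu k - lam k)) \<in> cell X y d E lam"
      "slack X y d E (\<lambda>k. lam k + (t * s) * (nu k - lam k)) \<subset> slack X y d E lam"
    using exists_line_step[OF assms(1) zeros assms(4) _ tight j(1)] j(2) unfolding D_def by blast
  define mu where "mu k = lam k + (t * s) * (nu k - lam k)" for k
  have "card (slack X y d E mu) < card (slack X y d E lam)"
    using step(2) assms(1) unfolding mu_def slack_def by (auto intro: psubset_card_mono)
  moreover have "(\<Sum>k\<in>T. \<bar>?r mu k\<bar>) \<le> (\<Sum>k\<in>T. \<bar>?r lam k\<bar>)"
  proof -
    have "(\<Sum>k\<in>T. \<bar>?r mu k\<bar>) = (\<Sum>k\<in>T. sgn (?r lam k) * (?r lam k + t * (s * D k)))"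
      using cell_abs_resid[OF step(1)] zeros assms(3)
      unfolding mu_def resid_affine D_def by (intro sum.cong) (auto simp: algebra_simps)
    also have "\<dots> = (\<Sum>k\<in>T. \<bar>?r lam k\<bar>) + t * (s * (\<Sum>k\<in>T. sgn (?r lam k) * D k))"
      by (simp add: sum.distrib sum_distrib_left algebra_simps abs_sgn mult.commute[of "sgn _"])
    finally show ?thesis using s \<open>0 < t\<close> by (simp add: mult_nonneg_nonpos)
  qed
  ultimately show ?thesis using step(1) unfolding mu_def by blast
qed

lemma exists_vertex_below:
  assumes "finite E" and zeros: "\<And>i. i < n \<Longrightarrow> (i, 0) \<in> E" and "T \<subseteq> {..<n}"
  shows "lam \<in> vecs (d - 1) \<Longrightarrow> \<exists>mu\<in>cell X y d E lam. is_vertex X y n d E mu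
           \<and> (\<Sum>i\<in>T. \<bar>resid X y d mu i\<bar>) \<le> (\<Sum>i\<in>T. \<bar>resid X y d lam i\<bar>)"
proof (induction "card (slack X y d E lam)" arbitrary: lam rule: less_induct)
  case less
  show ?case
  proof (cases "is_vertex X y n d E lam")
    case True
    then show ?thesis using cell_self[OF less.prems] by blast
  next
    case False
    then obtain mu where mu: "mu \<in> cell X y d E lam" "card (slack X y d E mu) < card (slack X y d E lam)"
      "(\<Sum>i\<in>T. \<bar>resid X y d mu i\<bar>) \<le> (\<Sum>i\<in>T. \<bar>resid X y d lam i\<bar>)"
      using exists_descent_step[OF assms less.prems] by blast
    moreover have "mu \<in> vecs (d - 1)" using mu(1) region_subset_vecs by blast
    ultimately obtain nu where "nu \<in> cell X y d E mu" "is_vertex X y n d E nu"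
      "(\<Sum>i\<in>T. \<bar>resid X y d nu i\<bar>) \<le> (\<Sum>i\<in>T. \<bar>resid X y d mu i\<bar>)"
      using less.hyps by blast
    then show ?thesis using cell_mono[OF mu(1)] mu(3) by fastforce
  qed
qed

section \<open>Weighted least squares and feasibility\<close>

(* Holds for every beta. *)
lemma feasV_weighted_resid_sq_le:
  assumes "1 \<le> d" and feas: "feasV X y n d w lam"
  shows "(\<Sum>i<n. w i * (resid X y d lam i)\<^sup>2) \<le> (\<Sum>i<n. ((\<Sum>j<d. X i j * beta j) - y i)\<^sup>2)"
proof -
  let ?r = "resid X y d lam"
  have w: "\<forall>i<n. 0 \<le> w i \<and> w i \<le> 1" and orth: "\<forall>j<d. (\<Sum>i<n. X i j * (w i * ?r i)) = 0"
    using feas unfolding feasV_def by auto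
  define lam' where "lam' j = (if j = 0 then 0 else lam (j - 1))" for j
  define h where "h i = (\<Sum>j<d. X i j * (beta j - lam' j))" for i
  have r_lam': "?r i = (\<Sum>j<d. X i j * lam' j) - y i" for i
  proof -
    obtain d' where d': "d = Suc d'" using assms(1) by (cases d) auto
    show ?thesis unfolding resid_def lam'_def d' sum.lessThan_Suc_shift by simp
  qed
  have r_beta: "(\<Sum>j<d. X i j * beta j) - y i = ?r i + h i" for i
    unfolding r_lam' h_def by (simp add: algebra_simps sum_subtractf)
  have cross: "(\<Sum>i<n. w i * ?r i * h i) = 0"
  proof -
    have "(\<Sum>i<n. w i * ?r i * h i) = (\<Sum>j<d. (beta j - lam' j) * (\<Sum>i<n. X i j * (w i * ?r i)))"
      unfolding h_def by (simp add: sum_distrib_left sum_distrib_right algebra_simps sum.swap[of _ "{..<n}"])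
    then show ?thesis using orth by simp
  qed
  have "0 \<le> (\<Sum>i<n. w i * (h i)\<^sup>2)" using w by (intro sum_nonneg) simp
  then have "(\<Sum>i<n. w i * (?r i)\<^sup>2) \<le> (\<Sum>i<n. w i * (?r i)\<^sup>2) + 2 * (\<Sum>i<n. w i * ?r i * h i)
          + (\<Sum>i<n. w i * (h i)\<^sup>2)"
    using cross by simp
  also have "\<dots> = (\<Sum>i<n. w i * (?r i + h i)\<^sup>2)"
    by (simp add: power2_eq_square sum.distrib sum_distrib_left algebra_simps)
  also have "\<dots> \<le> (\<Sum>i<n. (?r i + h i)\<^sup>2)"
    using w by (intro sum_mono) (auto intro: mult_left_le_one_le)
  finally show ?thesis unfolding r_beta .
qed

lemma sum_abs_le_Vval: "feasV X y n d w lam \<Longrightarrow> (\<Sum>i<n. \<bar>w i\<bar>) \<le> Vval X y n d"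
proof -
  assume feas: "feasV X y n d w lam"
  have "bdd_above {(\<Sum>i<n. \<bar>w i\<bar>) | w lam. feasV X y n d w lam}"
  proof (rule bdd_aboveI)
    fix x assume "x \<in> {(\<Sum>i<n. \<bar>w i\<bar>) | w lam. feasV X y n d w lam}"
    then obtain w lam where "x = (\<Sum>i<n. \<bar>w i\<bar>)" "feasV X y n d w lam" by blast
    then show "x \<le> real n"
      using sum_mono[of "{..<n}" "\<lambda>i. \<bar>w i\<bar>" "\<lambda>_. 1"] unfolding feasV_def by auto
  qed
  then show ?thesis unfolding Vval_def using feas by (intro cSup_upper) auto
qed

lemma feasV_div01:
  assumes "gfeas X y n d R sigma g lam" "R \<subseteq> vecs (d - 1)" "\<forall>i<n. sigma i \<in> {-1, 1}"
  shows "feasV X y n d (\<lambda>i. div01 (g i) (resid X y d lam i)) lam"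
proof -
  have "(0 \<le> g i \<and> g i \<le> resid X y d lam i) \<or> (resid X y d lam i \<le> g i \<and> g i \<le> 0)" if "i < n" for i
    using assms(1,3) that unfolding gfeas_def by fastforce
  then show ?thesis
    using assms(1,2) div01_between unfolding feasV_def gfeas_def by auto
qed

lemma gfeas_scaled_resid:
  assumes "feasV X y n d w lam" "lam \<in> R"
    and "\<forall>i<n. (sigma i = 1 \<longrightarrow> (\<forall>l\<in>R. 0 \<le> resid X y d l i)) \<and> (sigma i = -1 \<longrightarrow> (\<forall>l\<in>R. resid X y d l i \<le> 0))"
  shows "gfeas X y n d R sigma (\<lambda>i. w i * resid X y d lam i) lam"
proof -
  have "(\<lambda>i. w i * resid X y d lam i) i \<in> {0..resid X y d lam i}" if "i < n" "0 \<le> resid X y d lam i" for i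
    using assms(1) that unfolding feasV_def by (auto intro: mult_left_le_one_le)
  moreover have "(\<lambda>i. w i * resid X y d lam i) i \<in> {resid X y d lam i..0}" if "i < n" "resid X y d lam i \<le> 0" for i
    using assms(1) that mult_right_mono_neg[of "w i" 1 "resid X y d lam i"]
    unfolding feasV_def by (auto intro: mult_nonneg_nonpos)
  ultimately show ?thesis
    using assms unfolding gfeas_def feasV_def by fastforce
qed

section \<open>The programs of all regions\<close>

locale region_relaxation =
  fixes X :: "nat \<Rightarrow> nat \<Rightarrow> real" and y :: "nat \<Rightarrow> real" and n d :: nat and beta0 :: "nat \<Rightarrow> real"
    and M eps delta :: real and E :: "(nat \<times> real) set"
    and lam0 sigma ghat lamhat :: "(nat \<Rightarrow> real) set \<Rightarrow> nat \<Rightarrow> real"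
  assumes n_pos: "1 \<le> n" and d_pos: "1 \<le> d"
    and M_def: "M = sqrt (\<Sum>i<n. ((\<Sum>j<d. X i j * beta0 j) - y i)\<^sup>2)"
    and eps_pos: "0 < eps" and delta_pos: "0 < delta"
    and finite_E: "finite E"
    and E_contains: "\<And>i. i < n \<Longrightarrow>
          {(i, 0), (i, M), (i, - M), (i, delta * M / sqrt n), (i, - (delta * M / sqrt n))} \<subseteq> E"
    and rep: "\<forall>R\<in>regions X y d E. lam0 R \<in> R \<and>
               (\<forall>i<n. sigma R i \<in> {-1, 1} \<and>
                  (sigma R i = 1 \<longrightarrow> (\<forall>lam\<in>R. resid X y d lam i \<ge> 0)) \<and>
                  (sigma R i = -1 \<longrightarrow> (\<forall>lam\<in>R. resid X y d lam i \<le> 0)))"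
    and maxim: "\<forall>R\<in>regions X y d E. gfeas X y n d R (sigma R) (ghat R) (lamhat R) \<and>
               (\<forall>g lam. gfeas X y n d R (sigma R) g lam \<longrightarrow>
                  gobj X y n d M delta (lam0 R) g \<le> gobj X y n d M delta (lam0 R) (ghat R))"
begin

abbreviation "res \<equiv> resid X y d"

definition "tau = delta * M / sqrt n"

lemma M_nonneg: "0 \<le> M"
  unfolding M_def by (simp add: sum_nonneg)

lemma tau_pos: "0 < M \<Longrightarrow> 0 < tau"
  unfolding tau_def using delta_pos n_pos by simp

lemma zeros_in_E: "i < n \<Longrightarrow> (i, 0) \<in> E"
  using E_contains by blast

lemma fit_le_M_sq: "feasV X y n d w lam \<Longrightarrow> (\<Sum>i<n. w i * (res lam i)\<^sup>2) \<le> M\<^sup>2"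
  unfolding M_def using feasV_weighted_resid_sq_le[OF d_pos] by (simp add: sum_nonneg)

lemma feasV_at_region:
  assumes "R \<in> regions X y d E"
  shows "feasV X y n d (\<lambda>i. div01 (ghat R i) (res (lamhat R) i)) (lamhat R)"
proof (rule feasV_div01)
  show "gfeas X y n d R (sigma R) (ghat R) (lamhat R)" using maxim assms by blast
  show "R \<subseteq> vecs (d - 1)" using regions_subset_vecs assms .
  show "\<forall>i<n. sigma R i \<in> {-1, 1}" using rep assms by blast
qed

lemma Vhat_le_Vval:
  assumes "R \<in> regions X y d E"
  shows "Vhat X y n d (ghat R) (lamhat R) \<le> Vval X y n d"
proof -
  have "0 \<le> div01 (ghat R i) (res (lamhat R) i)" if "i < n" for i
    using feasV_at_region[OF assms] that unfolding feasV_def by blast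
  then have "Vhat X y n d (ghat R) (lamhat R) = (\<Sum>i<n. \<bar>div01 (ghat R i) (res (lamhat R) i)\<bar>)"
    unfolding Vhat_def by (intro sum.cong) auto
  then show ?thesis using sum_abs_le_Vval[OF feasV_at_region[OF assms]] by simp
qed

lemma representatives_in_region: "R \<in> regions X y d E \<Longrightarrow> lam0 R \<in> R \<and> lamhat R \<in> R"
  using rep maxim unfolding gfeas_def by blast

lemma fraction_at_region:
  assumes "R \<in> regions X y d E" "i < n"
  shows "signed_fraction (ghat R i) (res (lam0 R) i) (res (lamhat R) i)"
proof -
  have "lam0 R \<in> R" "sigma R i \<in> {-1, 1}"
    and sign: "sigma R i = 1 \<Longrightarrow> 0 \<le> res (lam0 R) i" "sigma R i = -1 \<Longrightarrow> res (lam0 R) i \<le> 0"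
    using rep assms by blast+
  moreover have "sigma R i = 1 \<Longrightarrow> 0 \<le> ghat R i \<and> ghat R i \<le> res (lamhat R) i"
    "sigma R i = -1 \<Longrightarrow> res (lamhat R) i \<le> ghat R i \<and> ghat R i \<le> 0"
    using maxim assms unfolding gfeas_def by blast+
  ultimately show ?thesis unfolding signed_fraction_def by auto
qed

lemma cell_follows:
  assumes "mu \<in> cell X y d E lam" "i < n" "c \<in> {0, M, - M, tau, - tau}"
  shows "stays_on_side c (res lam i) (res mu i)"
proof -
  have "(i, c) \<in> E" using E_contains[OF assms(2)] assms(3) unfolding tau_def by blast
  then show ?thesis using assms(1) unfolding mem_cell_iff by blast
qed

lemma resid_at_vertex_cell:
  assumes "is_vertex X y n d E mu" "mu \<in> vecs (d - 1)" "i < n"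
  shows "res (lam0 (cell X y d E mu)) i = res mu i"
proof -
  have "lam0 (cell X y d E mu) \<in> cell X y d E mu" using rep cell_in_regions[OF assms(2)] by blast
  then show ?thesis using assms(1,3) unfolding is_vertex_def by blast
qed

lemma small_deficit_le:
  assumes few_small: "\<forall>R\<in>regions X y d E. real (card (BdM X y n d M delta (lam0 R))) \<le> eps * n"
    and "0 < M" "lam \<in> vecs (d - 1)" and T: "T \<subseteq> {i. i < n \<and> \<bar>res lam i\<bar> \<le> tau}"
  shows "(\<Sum>i\<in>T. 1 - \<bar>res lam i\<bar> / tau) \<le> eps * n"
proof -
  have "T \<subseteq> {..<n}" using T by auto
  then obtain mu where mu: "mu \<in> cell X y d E lam" "is_vertex X y n d E mu"
    "(\<Sum>i\<in>T. \<bar>res mu i\<bar>) \<le> (\<Sum>i\<in>T. \<bar>res lam i\<bar>)"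
    using exists_vertex_below[OF finite_E zeros_in_E _ assms(3)] by blast
  have "mu \<in> vecs (d - 1)" using mu(1) region_subset_vecs by blast
  define R where "R = cell X y d E mu"
  have "{i \<in> T. \<bar>res mu i\<bar> < tau} \<subseteq> BdM X y n d M delta (lam0 R)"
    using resid_at_vertex_cell[OF mu(2) \<open>mu \<in> vecs (d - 1)\<close>] T
    unfolding R_def BdM_def tau_def by auto
  moreover have "finite (BdM X y n d M delta (lam0 R))" unfolding BdM_def by simp
  ultimately have "card {i \<in> T. \<bar>res mu i\<bar> < tau} \<le> card (BdM X y n d M delta (lam0 R))"
    by (rule card_mono[rotated])
  moreover have "real (card (BdM X y n d M delta (lam0 R))) \<le> eps * n"
    using few_small cell_in_regions[OF \<open>mu \<in> vecs (d - 1)\<close>] unfolding R_def by blast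
  ultimately have "card {i \<in> T. \<bar>res mu i\<bar> < tau} \<le> eps * n"
    by (meson of_nat_le_iff order_trans)
  have "finite T" using \<open>T \<subseteq> {..<n}\<close> finite_subset by blast
  have "(\<Sum>i\<in>T. 1 - \<bar>res lam i\<bar> / tau) \<le> (\<Sum>i\<in>T. 1 - \<bar>res mu i\<bar> / tau)"
    using mu(3) tau_pos[OF \<open>0 < M\<close>] by (simp add: sum_subtractf sum_divide_distrib[symmetric] divide_right_mono)
  also have "\<dots> \<le> (\<Sum>i\<in>T. of_bool (\<bar>res mu i\<bar> < tau))"
  proof (rule sum_mono)
    fix i assume "i \<in> T"
    then have i: "i < n" "\<bar>res lam i\<bar> \<le> tau" using T by auto
    have "tau \<in> {0, M, - M, tau, - tau}" "- tau \<in> {0, M, - M, tau, - tau}" by simp_all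
    then have "\<bar>res mu i\<bar> \<le> tau"
      using stays_on_side_abs(1)[OF cell_follows[OF mu(1) i(1)] cell_follows[OF mu(1) i(1)]] i(2) by blast
    then show "1 - \<bar>res mu i\<bar> / tau \<le> of_bool (\<bar>res mu i\<bar> < tau)"
      using tau_pos[OF \<open>0 < M\<close>] by auto
  qed
  also have "\<dots> = card {i \<in> T. \<bar>res mu i\<bar> < tau}"
    using \<open>finite T\<close> by (simp add: Collect_conj_eq Int_commute)
  finally show ?thesis using \<open>card {i \<in> T. \<bar>res mu i\<bar> < tau} \<le> eps * n\<close> by linarith
qed

lemma resid_const_if_few_small:
  assumes few_small: "\<forall>R\<in>regions X y d E. real (card (BdM X y n d M delta (lam0 R))) \<le> eps * n"
    and "0 < M" "eps * n < 1" "lam \<in> vecs (d - 1)" "mu \<in> vecs (d - 1)" "i < n"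
  shows "res lam i = res mu i"
proof (rule ccontr)
  assume ne: "res lam i \<noteq> res mu i"
  define nu where "nu j = lam j + res lam i / (res lam i - res mu i) * (mu j - lam j)" for j
  have "nu \<in> vecs (d - 1)" unfolding nu_def using vecs_affine[OF assms(4,5)] .
  have "res nu i = 0" using ne unfolding nu_def resid_affine by (simp add: field_simps)
  define R where "R = cell X y d E nu"
  have R: "R \<in> regions X y d E" unfolding R_def using cell_in_regions[OF \<open>nu \<in> vecs (d - 1)\<close>] .
  then have "lam0 R \<in> cell X y d E nu" using representatives_in_region unfolding R_def by blast
  then have "res (lam0 R) i = 0"
    using \<open>res nu i = 0\<close> zeros_in_E[OF assms(6)] unfolding mem_cell_iff stays_on_side_def by fastforce
  then have "i \<in> BdM X y n d M delta (lam0 R)"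
    using tau_pos[OF assms(2)] assms(6) unfolding BdM_def tau_def by simp
  then have "1 \<le> card (BdM X y n d M delta (lam0 R))"
    using finite_BdM card_0_eq[of "BdM X y n d M delta (lam0 R)"] by fastforce
  then show False using bspec[OF few_small R] assms(3) by simp
qed

lemma gobj_eq_sum:
  "gobj X y n d M delta l g = (\<Sum>i\<in>{i. i < n \<and> tau \<le> \<bar>res l i\<bar> \<and> \<bar>res l i\<bar> \<le> M}. min (g i / res l i) 1)"
  unfolding gobj_def BM_def BdM_def tau_def by (rule sum.cong) auto

lemma weight_transfer_at_cell:
  assumes feas: "feasV X y n d w lam" and "0 < M"
  defines "R \<equiv> cell X y d E lam"
  shows "weight_transfer n eps tau M (res lam) (res (lam0 R)) (res (lamhat R)) w (ghat R)"
proof -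
  have "lam \<in> vecs (d - 1)" using feas unfolding feasV_def by blast
  then have R: "R \<in> regions X y d E" unfolding R_def by (rule cell_in_regions)
  then have in_R: "lam0 R \<in> R" "lamhat R \<in> R" using representatives_in_region by blast+
  show ?thesis
  proof
    show "0 < tau" using tau_pos[OF \<open>0 < M\<close>] .
    show "0 < M" "0 \<le> eps" using \<open>0 < M\<close> eps_pos by simp_all
    show "0 \<le> w i \<and> w i \<le> 1" if "i < n" for i using feas that unfolding feasV_def by blast
    show "(\<Sum>i<n. w i * (res lam i)\<^sup>2) \<le> M\<^sup>2" using fit_le_M_sq[OF feas] .
    show "(\<Sum>i<n. div01 (ghat R i) (res (lamhat R) i) * (res (lamhat R) i)\<^sup>2) \<le> M\<^sup>2"
      using fit_le_M_sq[OF feasV_at_region[OF R]] .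
    show "signed_fraction (ghat R i) (res (lam0 R) i) (res (lamhat R) i)" if "i < n" for i
      using fraction_at_region[OF R that] .
    show "stays_on_side c (res lam i) (res (lam0 R) i)" "stays_on_side c (res lam i) (res (lamhat R) i)"
      if "i < n" "c \<in> {0, M, - M, tau, - tau}" for i c
      using cell_follows in_R that unfolding R_def by blast+
  qed
qed

lemma sum_weights_le_Vhat_at_cell:
  assumes feas: "feasV X y n d w lam" and "lam \<in> Rs" "Rs \<in> regions X y d E"
    and stable: "\<forall>l\<in>Rs.
        real (card {i \<in> {..<n} - ({i. i < n \<and> \<bar>res lam i\<bar> > M}
                                  \<union> {i. i < n \<and> \<bar>res lam i\<bar> \<le> delta * M / sqrt n}).
                 \<bar>\<bar>res l i\<bar> / \<bar>res lam i\<bar> - 1\<bar> > eps})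
        \<le> eps * real n"
    and few_small: "\<forall>R\<in>regions X y d E. real (card (BdM X y n d M delta (lam0 R))) \<le> eps * n"
    and "0 < M"
  defines "R \<equiv> cell X y d E lam"
  shows "(\<Sum>i<n. w i) \<le> Vhat X y n d (ghat R) (lamhat R) + 9 * eps * n + 1"
proof -
  have "lam \<in> vecs (d - 1)" using feas unfolding feasV_def by blast
  then have R: "R \<in> regions X y d E" "lam \<in> R" unfolding R_def using cell_in_regions cell_self by auto
  have in_Rs: "lam0 R \<in> Rs" "lamhat R \<in> Rs"
    using representatives_in_region[OF R(1)] assms(2,3) cell_subset_region unfolding R_def regions_def by blast+
  interpret T: weight_transfer n eps tau M "res lam" "res (lam0 R)" "res (lamhat R)" w "ghat R"
    using weight_transfer_at_cell[OF feas \<open>0 < M\<close>] unfolding R_def .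
  have "(\<Sum>i<n. w i) \<le> (\<Sum>i<n. T.u i) + 9 * eps * n + 1"
  proof (rule T.sum_w_le_sum_u)
    have "gfeas X y n d R (sigma R) (\<lambda>i. w i * res lam i) lam"
      using gfeas_scaled_resid[OF feas R(2)] rep R(1) by blast
    then have "gobj X y n d M delta (lam0 R) (\<lambda>i. w i * res lam i) \<le> gobj X y n d M delta (lam0 R) (ghat R)"
      using maxim R(1) by blast
    then show "(\<Sum>i\<in>T.A. min (w i * res lam i / res (lam0 R) i) 1) \<le> (\<Sum>i\<in>T.A. min (ghat R i / res (lam0 R) i) 1)"
      unfolding gobj_eq_sum T.A_def by simp
  next
    have "T.unstable (res l) = {i \<in> {..<n} - ({i. i < n \<and> \<bar>res lam i\<bar> > M}
            \<union> {i. i < n \<and> \<bar>res lam i\<bar> \<le> delta * M / sqrt n}). \<bar>\<bar>res l i\<bar> / \<bar>res lam i\<bar> - 1\<bar> > eps}" for l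
      unfolding T.unstable_def unfolding tau_def by auto
    then show "card (T.unstable (res (lam0 R))) \<le> eps * n" "card (T.unstable (res (lamhat R))) \<le> eps * n"
      using bspec[OF stable] in_Rs by auto
  next
    have "T.small = BdM X y n d M delta (lam0 R)" unfolding T.small_def unfolding BdM_def tau_def ..
    then show "card T.small \<le> eps * n" using bspec[OF few_small R(1)] by simp
  next
    have "T.A_below \<subseteq> {i. i < n \<and> \<bar>res lam i\<bar> \<le> tau}" unfolding T.A_below_def T.A_def by auto
    then show "(\<Sum>i\<in>T.A_below. 1 - \<bar>res lam i\<bar> / tau) \<le> eps * n"
      by (rule small_deficit_le[OF few_small \<open>0 < M\<close> \<open>lam \<in> vecs (d - 1)\<close>])
  next
    have "lam0 R \<in> vecs (d - 1)" using representatives_in_region R(1) regions_subset_vecs by blast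
    then show "eps * n < 1 \<Longrightarrow> \<forall>i<n. res (lam0 R) i = res lam i"
      using resid_const_if_few_small[OF few_small \<open>0 < M\<close> _ _ \<open>lam \<in> vecs (d - 1)\<close>] by simp
  qed
  then show ?thesis unfolding Vhat_def T.u_def .
qed

lemma sum_weights_le_Vhat_at_cell_of_exact_fit:
  assumes feas: "feasV X y n d w lam" and "M = 0"
  defines "R \<equiv> cell X y d E lam"
  shows "(\<Sum>i<n. w i) \<le> Vhat X y n d (ghat R) (lamhat R)"
  unfolding Vhat_def
proof (rule sum_le_sum_div01_of_exact_fit)
  have "lam \<in> vecs (d - 1)" using feas unfolding feasV_def by blast
  then have R: "R \<in> regions X y d E" unfolding R_def by (rule cell_in_regions)
  show "0 \<le> w i \<and> w i \<le> 1" if "i < n" for i using feas that unfolding feasV_def by blast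
  show "(\<Sum>i<n. w i * (res lam i)\<^sup>2) \<le> 0" using fit_le_M_sq[OF feas] \<open>M = 0\<close> by simp
  show "stays_on_side 0 (res lam i) (res (lamhat R) i)" if "i < n" for i
    using cell_follows representatives_in_region[OF R] that unfolding R_def by blast
  show "signed_fraction (ghat R i) (res (lam0 R) i) (res (lamhat R) i)" if "i < n" for i
    using fraction_at_region[OF R that] .
qed

lemma exists_region_Vhat_ge:
  assumes feas: "feasV X y n d w lam" and "lam \<in> Rs" "Rs \<in> regions X y d E"
    and stable: "\<forall>l\<in>Rs.
        real (card {i \<in> {..<n} - ({i. i < n \<and> \<bar>res lam i\<bar> > M}
                                  \<union> {i. i < n \<and> \<bar>res lam i\<bar> \<le> delta * M / sqrt n}).
                 \<bar>\<bar>res l i\<bar> / \<bar>res lam i\<bar> - 1\<bar> > eps})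
        \<le> eps * real n"
    and few_small: "\<forall>R\<in>regions X y d E. real (card (BdM X y n d M delta (lam0 R))) \<le> eps * n"
  shows "\<exists>R\<in>regions X y d E. (\<Sum>i<n. \<bar>w i\<bar>) - 12 * eps * n - 1 \<le> Vhat X y n d (ghat R) (lamhat R)"
proof -
  define R where "R = cell X y d E lam"
  have "lam \<in> vecs (d - 1)" and w: "\<forall>i<n. 0 \<le> w i" using feas unfolding feasV_def by auto
  then have "R \<in> regions X y d E" unfolding R_def by (intro cell_in_regions)
  moreover have "(\<Sum>i<n. w i) \<le> Vhat X y n d (ghat R) (lamhat R) + 9 * eps * n + 1"
  proof (cases "M = 0")
    case True
    have "0 \<le> 9 * eps * n + 1" using eps_pos by simp
    then show ?thesis using sum_weights_le_Vhat_at_cell_of_exact_fit[OF feas True] unfolding R_def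
      by linarith
  next
    case False
    then show ?thesis using sum_weights_le_Vhat_at_cell[OF assms] M_nonneg unfolding R_def by simp
  qed
  moreover have "(\<Sum>i<n. \<bar>w i\<bar>) = (\<Sum>i<n. w i)" using w by simp
  moreover have "0 \<le> 3 * eps * n" using eps_pos by simp
  ultimately show ?thesis by (intro bexI[of _ R]) linarith
qed

end

theorem lemma5:
  fixes X :: "nat \<Rightarrow> nat \<Rightarrow> real" and y :: "nat \<Rightarrow> real" and n d :: nat
    and beta0 :: "nat \<Rightarrow> real" and eps delta :: real and S :: "nat set"
    and wstar lamstar :: "nat \<Rightarrow> real" and Rstar :: "(nat \<Rightarrow> real) set"
    and lam0 :: "(nat \<Rightarrow> real) set \<Rightarrow> nat \<Rightarrow> real"
    and sigma :: "(nat \<Rightarrow> real) set \<Rightarrow> nat \<Rightarrow> real"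
    and ghat lamhat :: "(nat \<Rightarrow> real) set \<Rightarrow> nat \<Rightarrow> real"
    and M V :: real and E :: "(nat \<times> real) set" and Regs :: "(nat \<Rightarrow> real) set set"
  assumes n_pos: "1 \<le> n" and d_pos: "1 \<le> d"
    and beta0_min: "\<forall>beta. (\<Sum>i<n. ((\<Sum>j<d. X i j * beta0 j) - y i)\<^sup>2)
                          \<le> (\<Sum>i<n. ((\<Sum>j<d. X i j * beta j) - y i)\<^sup>2)"
    and M_def: "M = sqrt (\<Sum>i<n. ((\<Sum>j<d. X i j * beta0 j) - y i)\<^sup>2)"
    and V_def: "V = Vval X y n d"
    and eps_pos: "eps > 0" and delta_pos: "delta > 0" and S_sub: "S \<subseteq> {..<n}"
    and E_def: "E = eqns n M eps delta S"
    and Regs_def: "Regs = regions X y d E"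
    and rep: "\<forall>R\<in>Regs. lam0 R \<in> R \<and>
               (\<forall>i<n. sigma R i \<in> {-1, 1} \<and>
                  (sigma R i = 1 \<longrightarrow> (\<forall>lam\<in>R. resid X y d lam i \<ge> 0)) \<and>
                  (sigma R i = -1 \<longrightarrow> (\<forall>lam\<in>R. resid X y d lam i \<le> 0)))"
    and maxim: "\<forall>R\<in>Regs. gfeas X y n d R (sigma R) (ghat R) (lamhat R) \<and>
               (\<forall>g lam. gfeas X y n d R (sigma R) g lam \<longrightarrow>
                  gobj X y n d M delta (lam0 R) g \<le> gobj X y n d M delta (lam0 R) (ghat R))"
    and wstar_feas: "feasV X y n d wstar lamstar"
    and wstar_opt: "(\<Sum>i<n. \<bar>wstar i\<bar>) = V"
    and Rstar: "Rstar \<in> Regs" "lamstar \<in> Rstar"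
    and stable: "\<forall>lam\<in>Rstar.
        real (card {i \<in> {..<n} - ({i. i < n \<and> \<bar>resid X y d lamstar i\<bar> > M}
                                  \<union> {i. i < n \<and> \<bar>resid X y d lamstar i\<bar> \<le> delta * M / sqrt n}).
                 \<bar>\<bar>resid X y d lam i\<bar> / \<bar>resid X y d lamstar i\<bar> - 1\<bar> > eps})
        \<le> eps * real n"
  shows "real (Max ((\<lambda>R. card (BdM X y n d M delta (lam0 R))) ` Regs)) > eps * real n
         \<or> (V - 12 * eps * real n - 1 \<le> Max ((\<lambda>R. Vhat X y n d (ghat R) (lamhat R)) ` Regs)
            \<and> Max ((\<lambda>R. Vhat X y n d (ghat R) (lamhat R)) ` Regs) \<le> V)"
proof -
  have "finite E" using finite_eqns[OF S_sub] unfolding E_def .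
  interpret region_relaxation X y n d beta0 M eps delta E lam0 sigma ghat lamhat
  proof
    show "{(i, 0), (i, M), (i, - M), (i, delta * M / sqrt n), (i, - (delta * M / sqrt n))} \<subseteq> E"
      if "i < n" for i
      using that unfolding E_def eqns_def by auto
  qed (use assms \<open>finite E\<close> in \<open>simp_all only: Regs_def\<close>)
  have Regs: "finite Regs" "Regs \<noteq> {}"
    using finite_regions[OF \<open>finite E\<close>] Rstar unfolding Regs_def by auto
  have upper: "Max ((\<lambda>R. Vhat X y n d (ghat R) (lamhat R)) ` Regs) \<le> V"
    using Regs Vhat_le_Vval unfolding V_def Regs_def by simp
  show ?thesis
  proof (cases "eps * n < Max ((\<lambda>R. card (BdM X y n d M delta (lam0 R))) ` Regs)")
    case False
    have "\<forall>R\<in>regions X y d E. card (BdM X y n d M delta (lam0 R))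
            \<le> Max ((\<lambda>R. card (BdM X y n d M delta (lam0 R))) ` Regs)"
      using Regs unfolding Regs_def by simp
    then have "\<forall>R\<in>regions X y d E. real (card (BdM X y n d M delta (lam0 R))) \<le> eps * n"
      using False by (meson not_less of_nat_le_iff order_trans)
    then obtain R where "R \<in> Regs" "V - 12 * eps * n - 1 \<le> Vhat X y n d (ghat R) (lamhat R)"
      using exists_region_Vhat_ge[OF wstar_feas Rstar(2)] Rstar(1) stable wstar_opt
      unfolding Regs_def by blast
    then show ?thesis using upper Regs by (auto simp: Max_ge_iff)
  qed simp
qed

end
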